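(* Let $0<|p|<1$, fix $\eta\in\mathbb C$ with $q=e^{2\pi\mathrm i\eta}$ and write $q^s=e^{2\pi\mathrm i\eta s}$ for $s\in\mathbb C$. Fix $u\in\mathbb C^\ast$ and a square root $\sqrt u$, and set $\sqrt{uq}=q^{1/2}\sqrt u$. For heights $a,c\in\mathbb C$ with $c-a\in\{\pm1\}$ let $\phi(a,c|u)$ be the function of $x\in\mathbb C^\ast$ $$\phi(a,c|u)(x)=\frac{\theta(q^{a(c-a)/2}\sqrt u\,x;p)\,\theta(q^{a(c-a)/2}\sqrt u/x;p)}{q^{a(c-a)/2}\sqrt u},$$ and define $\phi(a,c|uq)$ in the same way with $\sqrt u$ replaced by $\sqrt{uq}$. Then for all heights $a,b,d$ with $b-a\in\{\pm1\}$ and $d-b\in\{\pm1\}$, and generic $a,u$, $$\phi(b,d|u)=\sum_{c}W\bigg(\begin{matrix}a&b\\c&d\end{matrix}\,\bigg|\,u\bigg)\,\phi(a,c|uq),$$ where the sum is over $c$ with $c-a\in\{\pm1\}$ and $d-c\in\{\pm1\}$, and $W\Big(\begin{smallmatrix}a&b\\c&d\end{smallmatrix}\Big|u\Big)=R^{c-a,\,d-c}_{d-b,\,b-a}(a|u)$.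
   Context: $\theta(x;p)=\prod_{k=0}^\infty(1-xp^k)(1-p^{k+1}/x)$ for $x\neq0$. The elliptic SOS weights $R^{mn}_{kl}(\lambda|u)$, for $k,l,m,n\in\{\pm1\}$ with $k+l=m+n$ ($+$ meaning $+1$, $-$ meaning $-1$), are: $R^{++}_{++}=R^{--}_{--}=1$; $R^{+-}_{+-}(\lambda|u)=\frac{\theta(q^{1-\lambda};p)\theta(u;p)}{\theta(q^{-\lambda};p)\theta(uq;p)}$; $R^{-+}_{-+}(\lambda|u)=\frac{\theta(q^{\lambda+1};p)\theta(u;p)}{\theta(q^{\lambda};p)\theta(uq;p)}$; $R^{+-}_{-+}(\lambda|u)=\frac{\theta(q;p)\theta(q^{-\lambda}u;p)}{\theta(q^{-\lambda};p)\theta(uq;p)}$; $R^{-+}_{+-}(\lambda|u)=\frac{\theta(q;p)\theta(q^{\lambda}u;p)}{\theta(q^{\lambda};p)\theta(uq;p)}$. *)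

theory Defs
  imports "HOL-Analysis.Analysis"
begin

definition theta :: "complex \<Rightarrow> complex \<Rightarrow> complex" where
  "theta x p = (\<Prod>k. (1 - x * p ^ k) * (1 - p ^ (k + 1) / x))"

definition qpow :: "complex \<Rightarrow> complex \<Rightarrow> complex" where
  "qpow \<eta> s = exp (2 * pi * \<i> * \<eta> * s)"

text \<open>Elliptic SOS weights R^{mn}_{kl}(lambda|u), signs m n k l in {1,-1}
  (given as complex numbers); weights with m+n \<noteq> k+l are 0.\<close>
definition R_SOS :: "complex \<Rightarrow> complex \<Rightarrow> complex \<Rightarrow> complex \<Rightarrow> complex \<Rightarrow> complex
   \<Rightarrow> complex \<Rightarrow> complex \<Rightarrow> complex" where
  "R_SOS \<eta> p m n k l lam u =
    (let q = qpow \<eta> 1 in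
     if m = 1 \<and> n = 1 \<and> k = 1 \<and> l = 1 then 1
     else if m = -1 \<and> n = -1 \<and> k = -1 \<and> l = -1 then 1
     else if m = 1 \<and> n = -1 \<and> k = 1 \<and> l = -1 then
       theta (qpow \<eta> (1 - lam)) p * theta u p / (theta (qpow \<eta> (-lam)) p * theta (u * q) p)
     else if m = -1 \<and> n = 1 \<and> k = -1 \<and> l = 1 then
       theta (qpow \<eta> (lam + 1)) p * theta u p / (theta (qpow \<eta> lam) p * theta (u * q) p)
     else if m = 1 \<and> n = -1 \<and> k = -1 \<and> l = 1 then
       theta q p * theta (qpow \<eta> (-lam) * u) p / (theta (qpow \<eta> (-lam)) p * theta (u * q) p)
     else if m = -1 \<and> n = 1 \<and> k = 1 \<and> l = -1 then
       theta q p * theta (qpow \<eta> lam * u) p / (theta (qpow \<eta> lam) p * theta (u * q) p)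
     else 0)"

definition W_SOS :: "complex \<Rightarrow> complex \<Rightarrow> complex \<Rightarrow> complex \<Rightarrow> complex \<Rightarrow> complex
   \<Rightarrow> complex \<Rightarrow> complex" where
  "W_SOS \<eta> p a b c d u = R_SOS \<eta> p (c - a) (d - c) (d - b) (b - a) a u"

text \<open>phi(a,c|u)(x), where s is the chosen square root of u.\<close>
definition phi :: "complex \<Rightarrow> complex \<Rightarrow> complex \<Rightarrow> complex \<Rightarrow> complex \<Rightarrow> complex \<Rightarrow> complex" where
  "phi \<eta> p s a c x =
    (let t = qpow \<eta> (a * (c - a) / 2) * s in theta (t * x) p * theta (t / x) p / t)"

end

theory Submission
  imports Defs "HOL-Complex_Analysis.Complex_Analysis"
begin

text \<open>
  For a fixed nome p the functions theta_pair p t, x \<mapsto> \<theta>(tx) \<theta>(t/x) / t, lie in the space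
  of functions G holomorphic on \<complex> - {0}, invariant under x \<mapsto> 1/x and with
  G(px) = G(x) / (p x^2). This space is two-dimensional. Indeed, the zeros of \<theta> are simple and
  are exactly the integer powers of p, so if G vanishes at a generic point z, then
  G / theta_pair p z has only removable singularities; it is invariant under x \<mapsto> px, hence
  bounded, and by Liouville constant. Both sides of the connection formula lie in this space, so
  it suffices to compare them at the two points where one of the two functions \<phi>(a,c|uq)
  vanishes, which reduces everything to \<theta>(1/x) = -\<theta>(x)/x. Negating all heights changes
  neither \<phi> nor W, so only b = a + 1 needs treatment, and there the case d = a + 2 is trivial.
\<close>

lemma tendsto_quotient_at_common_zero:
  fixes f g :: "complex \<Rightarrow> complex"
  assumes "(f has_field_derivative D) (at z)" and "D \<noteq> 0" and "f z = 0"
    and "(g has_field_derivative E) (at z)" and "g z = 0"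
  shows "((\<lambda>x. g x / f x) \<longlongrightarrow> E / D) (at z)"
proof -
  have lim: "((\<lambda>x. (g x / (x - z)) / (f x / (x - z))) \<longlongrightarrow> E / D) (at z)"
    using assms by (intro tendsto_divide) (simp_all add: has_field_derivative_iff)
  have "\<forall>\<^sub>F x in at z. (g x / (x - z)) / (f x / (x - z)) = g x / f x"
    by (auto simp: eventually_at_filter)
  from tendsto_cong[OF this] lim show ?thesis
    by simp
qed

lemma eventually_nonzero_at_simple_zero:
  fixes f :: "complex \<Rightarrow> complex"
  assumes "(f has_field_derivative D) (at z)" and "D \<noteq> 0" and "f z = 0"
  shows "\<forall>\<^sub>F x in at z. f x \<noteq> 0"
proof -
  have "((\<lambda>x. f x / (x - z)) \<longlongrightarrow> D) (at z)"
    using assms by (simp add: has_field_derivative_iff)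
  then have "\<forall>\<^sub>F x in at z. f x / (x - z) \<noteq> 0"
    using assms(2) by (rule tendsto_imp_eventually_ne)
  then show ?thesis
    by eventually_elim auto
qed

lemma holomorphic_remove_sings_divide:
  fixes f g :: "complex \<Rightarrow> complex"
  assumes S: "open S" and g: "g holomorphic_on S" and f: "f holomorphic_on S"
    and zeros: "\<And>z. z \<in> S \<Longrightarrow> f z = 0 \<Longrightarrow> g z = 0 \<and> deriv f z \<noteq> 0"
  shows "remove_sings (\<lambda>x. g x / f x) holomorphic_on S"
proof -
  have "remove_sings (\<lambda>x. g x / f x) analytic_on {z}" if z: "z \<in> S" for z
  proof -
    have df: "(f has_field_derivative deriv f z) (at z)"
      and dg: "(g has_field_derivative deriv g z) (at z)"
      using holomorphic_derivI[OF f S z] holomorphic_derivI[OF g S z] by simp_all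
    have "(\<exists>c. ((\<lambda>x. g x / f x) \<longlongrightarrow> c) (at z)) \<and> (\<forall>\<^sub>F x in at z. f x \<noteq> 0)"
    proof (cases "f z = 0")
      case True
      with zeros[OF z] df dg show ?thesis
        by (blast intro: tendsto_quotient_at_common_zero eventually_nonzero_at_simple_zero)
    next
      case False
      have "isCont f z" "isCont g z"
        using df dg by (simp_all add: DERIV_isCont)
      with False show ?thesis
        by (metis isCont_def isCont_divide tendsto_imp_eventually_ne)
    qed
    then obtain c d where lim: "((\<lambda>x. g x / f x) \<longlongrightarrow> c) (at z)"
      and d: "d > 0" "\<And>x. x \<noteq> z \<Longrightarrow> dist x z < d \<Longrightarrow> f x \<noteq> 0"
      unfolding eventually_at by blast
    obtain e where e: "e > 0" "ball z e \<subseteq> S"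
      using S z open_contains_ball by blast
    define r where "r = min d e"
    have r: "r > 0" "ball z r \<subseteq> S" "\<And>x. x \<in> ball z r - {z} \<Longrightarrow> f x \<noteq> 0"
      using d e by (auto simp: r_def dist_commute)
    have "(\<lambda>x. g x / f x) holomorphic_on ball z r - {z}"
      using r by (intro holomorphic_intros holomorphic_on_subset[OF g] holomorphic_on_subset[OF f]) auto
    then have "isolated_singularity_at (\<lambda>x. g x / f x) z"
      unfolding isolated_singularity_at_def using r(1) by (auto simp: analytic_on_open open_Diff)
    then show ?thesis
      using lim by (rule remove_sings_analytic_at)
  qed
  then show ?thesis
    using S analytic_imp_holomorphic analytic_on_analytic_at by blast
qed

definition theta_pair :: "complex \<Rightarrow> complex \<Rightarrow> complex \<Rightarrow> complex" where
  "theta_pair p t x = theta (t * x) p * theta (t / x) p / t"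

definition pochhammer_inf :: "complex \<Rightarrow> complex \<Rightarrow> complex" where
  "pochhammer_inf p y = (\<Prod>k. 1 - y * p ^ k)"

locale nome =
  fixes p :: complex
  assumes nome_pos: "0 < norm p" and nome_less_1: "norm p < 1"
begin

lemma nome_nonzero: "p \<noteq> 0"
  using nome_pos by auto

lemma summable_norm_nome_power: "summable (\<lambda>k. norm p ^ k)"
  using nome_less_1 by (simp add: summable_geometric)

lemma convergent_prod_pochhammer_inf: "convergent_prod (\<lambda>k. 1 - y * p ^ k)"
proof -
  have "summable (\<lambda>k. norm ((1 - y * p ^ k) - 1))"
    using summable_mult[OF summable_norm_nome_power, of "norm y"] by (simp add: norm_mult norm_power)
  then show ?thesis
    by (intro abs_convergent_prod_imp_convergent_prod summable_imp_abs_convergent_prod)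
qed

lemma has_prod_pochhammer_inf: "(\<lambda>k. 1 - y * p ^ k) has_prod pochhammer_inf p y"
  unfolding pochhammer_inf_def using convergent_prod_pochhammer_inf by blast

lemma pochhammer_inf_eq_0_iff: "pochhammer_inf p y = 0 \<longleftrightarrow> (\<exists>k. y * p ^ k = 1)"
  using has_prod_eq_0_iff[OF has_prod_pochhammer_inf[of y]] by (auto simp: eq_commute[of 0])

lemma pochhammer_inf_rec: "pochhammer_inf p y = (1 - y) * pochhammer_inf p (p * y)"
proof (cases "y = 1")
  case True
  then show ?thesis by (auto simp: pochhammer_inf_eq_0_iff intro: exI[of _ 0])
next
  case False
  have "(\<Prod>n. 1 - y * p ^ Suc n) = pochhammer_inf p y / (1 - y)"
    using prodinf_split_head[OF convergent_prod_pochhammer_inf[of y]] False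
    unfolding pochhammer_inf_def by simp
  moreover have "(\<Prod>n. 1 - y * p ^ Suc n) = pochhammer_inf p (p * y)"
    unfolding pochhammer_inf_def by (simp add: algebra_simps)
  ultimately show ?thesis using False by (simp add: field_simps)
qed

lemma holomorphic_pochhammer_inf: "pochhammer_inf p holomorphic_on UNIV"
proof -
  have "pochhammer_inf p holomorphic_on ball y0 1" for y0
  proof -
    let ?K = "cball y0 1"
    have "uniformly_convergent_on ?K (\<lambda>N y. \<Prod>n<N. 1 - y * p ^ n)"
    proof (rule uniformly_convergent_on_prod')
      show "uniformly_convergent_on ?K (\<lambda>N y. \<Sum>n<N. norm (1 - y * p ^ n - 1))"
      proof (rule Weierstrass_m_test'[where M = "\<lambda>n. (norm y0 + 1) * norm p ^ n"])
        fix n y assume "y \<in> ?K"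
        then have "norm y \<le> norm y0 + 1"
          using norm_triangle_ineq2[of y y0] by (simp add: dist_norm norm_minus_commute)
        then show "norm (norm (1 - y * p ^ n - 1)) \<le> (norm y0 + 1) * norm p ^ n"
          by (simp add: norm_mult norm_power mult_right_mono)
      qed (intro summable_mult summable_norm_nome_power)
      show "continuous_on ?K (\<lambda>y. 1 - y * p ^ n)" for n
        by (intro continuous_intros)
    qed simp
    then obtain g where g: "uniform_limit ?K (\<lambda>N y. \<Prod>n<N. 1 - y * p ^ n) g sequentially"
      unfolding uniformly_convergent_on_def by blast
    have "g y = pochhammer_inf p y" if "y \<in> ?K" for y
      using tendsto_uniform_limitI[OF g that] has_prod_imp_tendsto'[OF has_prod_pochhammer_inf]
      by (rule LIMSEQ_unique)
    moreover have "g holomorphic_on ball y0 1"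
    proof (rule holomorphic_uniform_limit[OF _ g])
      show "\<forall>\<^sub>F N in sequentially. continuous_on ?K (\<lambda>y. \<Prod>n<N. 1 - y * p ^ n) \<and>
          (\<lambda>y. \<Prod>n<N. 1 - y * p ^ n) holomorphic_on ball y0 1"
        by (intro always_eventually allI conjI continuous_intros holomorphic_intros)
    qed auto
    ultimately show ?thesis
      by (metis (no_types, lifting) ball_subset_cball holomorphic_transform subsetD)
  qed
  then show ?thesis
    by (metis centre_in_ball holomorphic_on_imp_differentiable_at holomorphic_on_def
        field_differentiable_at_within open_ball zero_less_one)
qed

lemma theta_eq_pochhammer_inf:
  "x \<noteq> 0 \<Longrightarrow> theta x p = pochhammer_inf p x * pochhammer_inf p (p / x)"
  unfolding theta_def pochhammer_inf_def
  by (subst prodinf_mult[OF convergent_prod_pochhammer_inf convergent_prod_pochhammer_inf])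
     (simp add: mult.commute)

lemma holomorphic_theta: "(\<lambda>x. theta x p) holomorphic_on -{0}"
proof -
  have "(\<lambda>x. pochhammer_inf p x * pochhammer_inf p (p / x)) holomorphic_on -{0}"
    by (intro holomorphic_intros holomorphic_on_compose_gen[OF _ holomorphic_pochhammer_inf,
          unfolded o_def] holomorphic_on_subset[OF holomorphic_pochhammer_inf]) auto
  then show ?thesis
    by (rule holomorphic_transform) (simp add: theta_eq_pochhammer_inf)
qed

lemma theta_mult_nome:
  assumes "x \<noteq> 0"
  shows "theta (p * x) p = - theta x p / x"
proof -
  have px: "theta (p * x) p = pochhammer_inf p (p * x) * ((1 - 1 / x) * pochhammer_inf p (p / x))"
    using assms nome_nonzero pochhammer_inf_rec[of "1 / x"] by (simp add: theta_eq_pochhammer_inf)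
  have x: "theta x p = (1 - x) * pochhammer_inf p (p * x) * pochhammer_inf p (p / x)"
    using assms pochhammer_inf_rec[of x] by (simp add: theta_eq_pochhammer_inf)
  show ?thesis
    unfolding px x using assms by (simp add: field_simps)
qed

lemma theta_inverse: "x \<noteq> 0 \<Longrightarrow> theta (inverse x) p = - theta x p / x"
  using nome_nonzero theta_mult_nome[of x]
  by (simp add: theta_eq_pochhammer_inf field_simps)

definition nome_powers :: "complex set" where
  "nome_powers = range (power_int p)"

lemma one_in_nome_powers: "1 \<in> nome_powers"
  unfolding nome_powers_def by (metis power_int_0_right rangeI)

lemma countable_nome_powers: "countable nome_powers"
  unfolding nome_powers_def by simp

lemma nome_powers_invariant:
  assumes step: "\<And>x. x \<noteq> 0 \<Longrightarrow> P (p * x) \<longleftrightarrow> P x"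
    and "x \<noteq> 0" and "y \<in> nome_powers"
  shows "P (y * x) \<longleftrightarrow> P x"
proof -
  obtain k where k: "y = p powi k"
    using \<open>y \<in> nome_powers\<close> by (auto simp: nome_powers_def)
  have nz: "p powi i * x \<noteq> 0" for i
    using \<open>x \<noteq> 0\<close> nome_nonzero by simp
  have "P (p powi k * x) \<longleftrightarrow> P x"
  proof (induction k rule: int_induct[where k = 0])
    case (step1 i)
    then show ?case
      using step[OF nz[of i]] nome_nonzero by (simp add: power_int_add ac_simps)
  next
    case (step2 i)
    then show ?case
      using step[OF nz[of "i - 1"]] nome_nonzero by (simp add: power_int_diff ac_simps)
  qed simp
  then show ?thesis
    using k by simp
qed

lemma theta_mult_nome_powers_eq_0_iff:
  assumes "x \<noteq> 0" and "y \<in> nome_powers"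
  shows "theta (y * x) p = 0 \<longleftrightarrow> theta x p = 0"
  by (rule nome_powers_invariant[of "\<lambda>x. theta x p = 0", OF _ assms]) (simp add: theta_mult_nome)

lemma theta_eq_0_iff:
  assumes "x \<noteq> 0"
  shows "theta x p = 0 \<longleftrightarrow> x \<in> nome_powers"
proof
  assume "theta x p = 0"
  then consider k where "x * p ^ k = 1" | k where "p / x * p ^ k = 1"
    using assms by (auto simp: theta_eq_pochhammer_inf pochhammer_inf_eq_0_iff)
  then show "x \<in> nome_powers"
  proof cases
    case (1 k)
    then have "x = p powi (- int k)"
      using nome_nonzero by (simp add: power_int_minus field_simps)
    then show ?thesis by (simp add: nome_powers_def)
  next
    case (2 k)
    then have "x = p ^ Suc k"
      using assms nome_nonzero by (simp add: field_simps)
    then show ?thesis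
      unfolding nome_powers_def by (metis power_int_of_nat rangeI)
  qed
next
  assume "x \<in> nome_powers"
  have "theta 1 p = 0"
    by (simp add: theta_eq_pochhammer_inf pochhammer_inf_eq_0_iff exI[of _ 0])
  then show "theta x p = 0"
    using theta_mult_nome_powers_eq_0_iff[of 1 x] \<open>x \<in> nome_powers\<close> by simp
qed

lemma has_field_derivative_theta:
  "x \<noteq> 0 \<Longrightarrow>
    ((\<lambda>x. theta x p) has_field_derivative deriv (\<lambda>x. theta x p) x) (at x within S)"
  by (rule holomorphic_derivI[OF holomorphic_theta]) auto

lemma deriv_theta_one: "deriv (\<lambda>x. theta x p) 1 = - (pochhammer_inf p p)\<^sup>2"
proof -
  note D = holomorphic_derivI[OF holomorphic_pochhammer_inf, of _ UNIV, simplified]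
  have d1: "((\<lambda>x. pochhammer_inf p (p * x)) has_field_derivative
      deriv (pochhammer_inf p) (p * 1) * p) (at 1)"
    by (rule DERIV_chain2[OF D]) (intro derivative_eq_intros, auto)
  have d2: "((\<lambda>x. pochhammer_inf p (p / x)) has_field_derivative
      deriv (pochhammer_inf p) (p / 1) * (- p / 1\<^sup>2)) (at 1)"
    by (rule DERIV_chain2[OF D]) (intro derivative_eq_intros, auto simp: power2_eq_square)
  have d0: "((\<lambda>x. 1 - x) has_field_derivative -1) (at 1)"
    by (intro derivative_eq_intros) auto
  have d: "((\<lambda>x. (1 - x) * (pochhammer_inf p (p * x) * pochhammer_inf p (p / x)))
      has_field_derivative - (pochhammer_inf p p)\<^sup>2) (at 1)"
    by (rule DERIV_cong[OF DERIV_mult[OF d0 DERIV_mult[OF d1 d2]]]) (simp add: power2_eq_square)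
  have "theta x p = (1 - x) * (pochhammer_inf p (p * x) * pochhammer_inf p (p / x))"
    if "x \<noteq> 0" for x
    using that pochhammer_inf_rec[of x] by (simp add: theta_eq_pochhammer_inf)
  then have "((\<lambda>x. theta x p) has_field_derivative - (pochhammer_inf p p)\<^sup>2) (at 1)"
    by (intro has_field_derivative_transform_within_open[OF d, where S = "-{0}"]) auto
  then show ?thesis
    by (rule DERIV_imp_deriv)
qed

lemma deriv_theta_mult_nome:
  assumes "x \<noteq> 0" and "theta x p = 0"
  shows "deriv (\<lambda>x. theta x p) (p * x) = - deriv (\<lambda>x. theta x p) x / (p * x)"
proof -
  have "((\<lambda>y. theta (p * y) p) has_field_derivative deriv (\<lambda>x. theta x p) (p * x) * p) (at x)"
    by (intro DERIV_chain2[OF has_field_derivative_theta] derivative_eq_intros)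
       (use assms nome_nonzero in auto)
  moreover have "((\<lambda>y. theta (p * y) p) has_field_derivative
      (- deriv (\<lambda>x. theta x p) x * x - (- theta x p) * 1) / (x * x)) (at x)"
    by (rule has_field_derivative_transform_within_open[where S = "-{0}",
          OF DERIV_divide[OF DERIV_minus[OF has_field_derivative_theta] DERIV_ident]])
       (use assms in \<open>auto simp: theta_mult_nome\<close>)
  ultimately have "deriv (\<lambda>x. theta x p) (p * x) * p = - deriv (\<lambda>x. theta x p) x / x"
    using assms by (simp add: DERIV_unique)
  then show ?thesis
    using assms nome_nonzero by (simp add: field_simps)
qed

lemma deriv_theta_nonzero:
  assumes "x \<in> nome_powers"
  shows "deriv (\<lambda>x. theta x p) x \<noteq> 0"
proof -
  let ?P = "\<lambda>x. theta x p = 0 \<and> deriv (\<lambda>x. theta x p) x \<noteq> 0"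
  have "pochhammer_inf p p \<noteq> 0"
  proof
    assume "pochhammer_inf p p = 0"
    then obtain k where "norm p ^ Suc k = 1"
      by (metis norm_one norm_power pochhammer_inf_eq_0_iff power_Suc)
    moreover have "norm p ^ Suc k < 1"
      using nome_pos nome_less_1 by (intro power_Suc_less_one) auto
    ultimately show False by simp
  qed
  then have "?P 1"
    by (simp add: deriv_theta_one theta_eq_0_iff one_in_nome_powers)
  moreover have "?P (p * x) \<longleftrightarrow> ?P x" if "x \<noteq> 0" for x
    using that nome_nonzero by (auto simp: theta_mult_nome deriv_theta_mult_nome)
  ultimately show ?thesis
    using nome_powers_invariant[of ?P 1 x] assms by simp
qed

definition even_theta :: "(complex \<Rightarrow> complex) \<Rightarrow> bool" where
  "even_theta G \<longleftrightarrow> G holomorphic_on -{0}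
     \<and> (\<forall>x. x \<noteq> 0 \<longrightarrow> G (p * x) = G x / (p * x\<^sup>2))
     \<and> (\<forall>x. x \<noteq> 0 \<longrightarrow> G (inverse x) = G x)"

lemma even_theta_diff:
  assumes "even_theta G" and "even_theta H"
  shows "even_theta (\<lambda>x. G x - c * H x)"
  using assms unfolding even_theta_def
  by (simp add: holomorphic_on_diff holomorphic_on_mult diff_divide_distrib)

lemma even_theta_mult_nome_powers_eq_0_iff:
  assumes "even_theta G" and "x \<noteq> 0" and "y \<in> nome_powers"
  shows "G (y * x) = 0 \<longleftrightarrow> G x = 0"
  by (rule nome_powers_invariant[of "\<lambda>x. G x = 0", OF _ assms(2,3)])
     (use assms(1) nome_nonzero in \<open>simp add: even_theta_def\<close>)

lemma holomorphic_theta_pair: "t \<noteq> 0 \<Longrightarrow> theta_pair p t holomorphic_on -{0}"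
  unfolding theta_pair_def
  by (intro holomorphic_intros holomorphic_on_compose_gen[OF _ holomorphic_theta, unfolded o_def])
     auto

lemma even_theta_theta_pair:
  assumes t: "t \<noteq> 0"
  shows "even_theta (theta_pair p t)"
proof -
  have "theta_pair p t (p * x) = theta_pair p t x / (p * x\<^sup>2)" if x: "x \<noteq> 0" for x
  proof -
    have a: "theta (t * (p * x)) p = - theta (t * x) p / (t * x)"
      using theta_mult_nome[of "t * x"] t x by (simp add: ac_simps)
    have "theta (t / x) p = - theta (t / (p * x)) p / (t / (p * x))"
      using theta_mult_nome[of "t / (p * x)"] t x nome_nonzero by simp
    then have b: "theta (t / (p * x)) p = - (t / (p * x)) * theta (t / x) p"
      using t x nome_nonzero by (simp add: field_simps)
    show ?thesis
      unfolding theta_pair_def a b using t x nome_nonzero by (simp add: field_simps power2_eq_square)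
  qed
  moreover have "theta_pair p t (inverse x) = theta_pair p t x" for x
    by (simp add: theta_pair_def divide_inverse mult.commute)
  ultimately show ?thesis
    using holomorphic_theta_pair[OF t] unfolding even_theta_def by blast
qed

lemma theta_pair_self: "theta_pair p t t = 0"
  using theta_eq_0_iff[of 1] one_in_nome_powers by (cases "t = 0") (simp_all add: theta_pair_def)

lemma theta_pair_eq_0_iff:
  "t \<noteq> 0 \<Longrightarrow> x \<noteq> 0 \<Longrightarrow>
    theta_pair p t x = 0 \<longleftrightarrow> theta (t * x) p = 0 \<or> theta (t / x) p = 0"
  by (simp add: theta_pair_def)

lemma even_theta_vanishes_at_zeros_of_theta_pair:
  assumes G: "even_theta G" and t: "t \<noteq> 0" "G t = 0" and x: "x \<noteq> 0" "theta_pair p t x = 0"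
  shows "G x = 0"
proof -
  have "G (inverse t) = 0"
    using G t unfolding even_theta_def by auto
  then have vanish: "G (y * inverse t) = 0" if "y \<in> nome_powers" for y
    using even_theta_mult_nome_powers_eq_0_iff[OF G _ that] t by simp
  consider "t * x \<in> nome_powers" | "t / x \<in> nome_powers"
    using x t by (auto simp: theta_pair_eq_0_iff theta_eq_0_iff)
  then show ?thesis
  proof cases
    case 1
    then show ?thesis
      using vanish[of "t * x"] t by (simp add: field_simps)
  next
    case 2
    then have "G (inverse x) = 0"
      using vanish[of "t / x"] t by (simp add: field_simps)
    then show ?thesis
      using G x unfolding even_theta_def by auto
  qed
qed

lemma deriv_theta_pair_nonzero:
  assumes t: "t \<noteq> 0" "theta (t\<^sup>2) p \<noteq> 0" and x: "x \<noteq> 0" "theta_pair p t x = 0"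
  shows "deriv (theta_pair p t) x \<noteq> 0"
proof -
  let ?T = "\<lambda>x. theta x p" and ?T' = "deriv (\<lambda>x. theta x p)"
  have nz: "t * x \<noteq> 0" "t / x \<noteq> 0"
    using t x by auto
  have "((\<lambda>x. ?T (t * x)) has_field_derivative ?T' (t * x) * t) (at x)"
    by (rule DERIV_chain2[where g = "\<lambda>x. t * x", OF has_field_derivative_theta[OF nz(1)]])
       (intro derivative_eq_intros, auto)
  moreover have "((\<lambda>x. ?T (t / x)) has_field_derivative ?T' (t / x) * (- t / x\<^sup>2)) (at x)"
    by (rule DERIV_chain2[where g = "\<lambda>x. t / x", OF has_field_derivative_theta[OF nz(2)]])
       (intro derivative_eq_intros, auto simp: power2_eq_square x)
  ultimately have "(theta_pair p t has_field_derivative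
      (?T' (t * x) * t * ?T (t / x) + ?T' (t / x) * (- t / x\<^sup>2) * ?T (t * x)) / t) (at x)"
    unfolding theta_pair_def[abs_def] by (intro DERIV_cdivide DERIV_mult)
  then have deriv: "deriv (theta_pair p t) x =
      ?T' (t * x) * ?T (t / x) - ?T' (t / x) * ?T (t * x) / x\<^sup>2"
    using t by (simp add: DERIV_imp_deriv field_simps)
  have "\<not> (?T (t * x) = 0 \<and> ?T (t / x) = 0)"
  proof
    assume "?T (t * x) = 0 \<and> ?T (t / x) = 0"
    then have "?T ((t * x) * (t / x)) = 0"
      using theta_mult_nome_powers_eq_0_iff nz theta_eq_0_iff by blast
    then show False
      using t x by (simp add: power2_eq_square)
  qed
  moreover have "?T (t * x) = 0 \<or> ?T (t / x) = 0"
    using x t by (simp add: theta_pair_eq_0_iff)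
  ultimately consider "?T (t * x) = 0" "?T (t / x) \<noteq> 0" | "?T (t / x) = 0" "?T (t * x) \<noteq> 0"
    by blast
  then show ?thesis
  proof cases
    case 1
    then show ?thesis
      unfolding deriv using deriv_theta_nonzero theta_eq_0_iff[OF nz(1)] by simp
  next
    case 2
    then show ?thesis
      unfolding deriv using deriv_theta_nonzero theta_eq_0_iff[OF nz(2)] x by simp
  qed
qed

lemma nome_power_in_annulus:
  assumes "x \<noteq> 0"
  obtains k :: int where "norm p \<le> norm (p powi k * x)" and "norm (p powi k * x) \<le> 1"
proof -
  define L where "L = ln (norm p)"
  define m where "m = ln (norm x)"
  define k where "k = \<lceil>- m / L\<rceil>"
  have L: "L < 0"
    unfolding L_def using nome_pos nome_less_1 by simp
  have "- m / L \<le> of_int k" and "of_int k < - m / L + 1"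
    unfolding k_def by linarith+
  then have "exp L \<le> exp (of_int k * L + m)" and "exp (of_int k * L + m) \<le> exp 0"
    using L by (simp_all add: field_simps)
  moreover have "norm (p powi k * x) = exp (of_int k * L + m)"
    using nome_pos assms
    by (simp add: norm_mult norm_power_int powr_real_of_int'[symmetric] powr_def L_def m_def exp_add)
  moreover have "exp L = norm p"
    using nome_pos by (simp add: L_def)
  ultimately show ?thesis
    using that[of k] by simp
qed

lemma nome_invariant_holomorphic_constant:
  assumes H: "H holomorphic_on -{0}" and inv: "\<And>x. x \<noteq> 0 \<Longrightarrow> H (p * x) = H x"
  obtains C where "\<And>x. x \<noteq> 0 \<Longrightarrow> H x = C"
proof -
  define K :: "complex set" where "K = {y. norm p \<le> norm y \<and> norm y \<le> 1}"
  have "closed K"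
    unfolding K_def by (intro closed_Collect_conj closed_Collect_le continuous_intros)
  moreover have "bounded K"
    by (rule bounded_subset[OF bounded_cball[of 0 1]]) (auto simp: K_def)
  ultimately have "compact K"
    by (simp add: compact_eq_bounded_closed)
  moreover have "K \<subseteq> -{0}"
    unfolding K_def using nome_pos by auto
  ultimately have "bounded (H ` K)"
    by (meson H compact_continuous_image compact_imp_bounded continuous_on_subset
        holomorphic_on_imp_continuous_on)
  then obtain B where B: "\<And>y. y \<in> K \<Longrightarrow> norm (H y) \<le> B"
    unfolding bounded_iff by blast
  have "norm (H x) \<le> B" if x: "x \<noteq> 0" for x
  proof -
    obtain k :: int where "p powi k * x \<in> K"
      using nome_power_in_annulus[OF x] unfolding K_def by blast
    moreover have "H (p powi k * x) = H x"
      using nome_powers_invariant[of "\<lambda>y. H y = H x", OF _ x] inv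
      by (simp add: nome_powers_def)
    ultimately show ?thesis
      using B by fastforce
  qed
  then have "bounded (range (\<lambda>w. H (exp w)))"
    unfolding bounded_iff by (intro exI[of _ B]) simp
  moreover have "0 \<notin> range exp"
    by (metis exp_not_eq_zero rangeE)
  then have "(\<lambda>w. H (exp w)) holomorphic_on UNIV"
    using holomorphic_on_compose_gen[OF holomorphic_on_exp H, of UNIV] by (simp add: o_def)
  ultimately obtain C where C: "\<And>w. H (exp w) = C"
    using Liouville_theorem unfolding constant_on_def by blast
  show ?thesis
    by (rule that[of C]) (metis C exp_Ln)
qed

lemma even_theta_eq_multiple:
  assumes G: "even_theta G" and z: "z \<noteq> 0" "theta (z\<^sup>2) p \<noteq> 0" "G z = 0"
  obtains C where "\<And>x. x \<noteq> 0 \<Longrightarrow> G x = C * theta_pair p z x"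
proof -
  let ?f = "theta_pair p z"
  define h where "h x = G x / ?f x" for x
  define H where "H = remove_sings h"
  have G_holo: "G holomorphic_on -{0}" and f_holo: "?f holomorphic_on -{0}"
    using G holomorphic_theta_pair[OF z(1)] by (simp_all add: even_theta_def)
  have G_zero: "G x = 0" if "x \<noteq> 0" "?f x = 0" for x
    using even_theta_vanishes_at_zeros_of_theta_pair[OF G z(1,3) that] .
  have "H holomorphic_on -{0}"
    unfolding H_def h_def
    by (rule holomorphic_remove_sings_divide[OF _ G_holo f_holo])
       (use G_zero deriv_theta_pair_nonzero[OF z(1,2)] in auto)
  moreover have "H (p * x) = H x" for x
  proof -
    have "filtermap ((*) p) (at x) = at (p * x)"
      using nome_nonzero
      by (intro filtermap_nhds_eq_imp_filtermap_at_eq filtermap_nhds_times always_eventually) auto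
    moreover have "h \<circ> (*) p = h"
    proof
      fix y
      show "(h \<circ> (*) p) y = h y"
        using G even_theta_theta_pair[OF z(1)] nome_nonzero
        by (cases "y = 0") (simp_all add: even_theta_def h_def)
    qed
    ultimately show ?thesis
      unfolding H_def by (metis remove_sings_compose)
  qed
  ultimately obtain C where C: "\<And>x. x \<noteq> 0 \<Longrightarrow> H x = C"
    using nome_invariant_holomorphic_constant by blast
  have "G x = C * ?f x" if x: "x \<noteq> 0" for x
  proof (cases "?f x = 0")
    case True
    then show ?thesis
      using G_zero[OF x] by simp
  next
    case False
    have "isCont G x" "isCont ?f x"
      using x G_holo f_holo continuous_on_eq_continuous_at[of "-{0}"]
      by (auto dest!: holomorphic_on_imp_continuous_on)
    then have "isCont h x"
      unfolding h_def using False by (intro continuous_intros)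
    then have "H x = h x"
      unfolding H_def isCont_def by (rule remove_sings_eqI)
    then show ?thesis
      using C[OF x] False by (simp add: h_def)
  qed
  then show ?thesis
    using that by blast
qed

lemma exists_generic_point:
  assumes t: "t \<noteq> 0"
  obtains z where "z \<noteq> 0" "theta (z\<^sup>2) p \<noteq> 0"
    and "theta_pair p t z \<noteq> 0" "theta_pair p z t \<noteq> 0"
proof -
  define Bad where "Bad = insert 0 ((\<lambda>y. y / t) ` nome_powers \<union> (\<lambda>y. t * y) ` nome_powers
    \<union> (\<lambda>y. t / y) ` nome_powers \<union> csqrt ` nome_powers \<union> (\<lambda>y. - csqrt y) ` nome_powers)"
  have "countable Bad"
    unfolding Bad_def using countable_nome_powers by simp
  then have "Bad \<noteq> UNIV"
    using uncountable_UNIV_complex by metis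
  then obtain z where z: "z \<notin> Bad"
    by blast
  have not_nome_power: "y \<notin> nome_powers" if "z = g y" and "g ` nome_powers \<subseteq> Bad" for g y
    using z that by blast
  have "z\<^sup>2 \<notin> nome_powers"
    using not_nome_power[of csqrt] not_nome_power[of "\<lambda>y. - csqrt y"]
      power2_eq_iff[of z "csqrt (z\<^sup>2)"] by (auto simp: Bad_def)
  moreover have "t * z \<notin> nome_powers"
    using not_nome_power[of "\<lambda>y. y / t" "t * z"] t by (auto simp: Bad_def)
  moreover have "z / t \<notin> nome_powers"
    using not_nome_power[of "\<lambda>y. t * y" "z / t"] t by (auto simp: Bad_def)
  moreover have "t / z \<notin> nome_powers"
    using not_nome_power[of "\<lambda>y. t / y" "t / z"] t z by (auto simp: Bad_def)
  moreover have "z \<noteq> 0"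
    using z by (simp add: Bad_def)
  ultimately show ?thesis
    using that t by (simp add: theta_pair_eq_0_iff theta_eq_0_iff mult.commute)
qed

lemma even_theta_eq_0:
  assumes G: "even_theta G" and t: "t1 \<noteq> 0" "t2 \<noteq> 0" "theta_pair p t1 t2 \<noteq> 0"
    and vanish: "G t1 = 0" "G t2 = 0" and x: "x \<noteq> 0"
  shows "G x = 0"
proof -
  obtain z where z: "z \<noteq> 0" "theta (z\<^sup>2) p \<noteq> 0"
    and z_generic: "theta_pair p t1 z \<noteq> 0" "theta_pair p z t1 \<noteq> 0"
    using exists_generic_point[OF t(1)] .
  define c where "c = G z / theta_pair p t1 z"
  define G' where "G' x = G x - c * theta_pair p t1 x" for x
  have "even_theta G'"
    unfolding G'_def by (intro even_theta_diff G even_theta_theta_pair t(1))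
  moreover have "G' z = 0"
    using z_generic(1) by (simp add: G'_def c_def)
  ultimately obtain C where C: "\<And>x. x \<noteq> 0 \<Longrightarrow> G' x = C * theta_pair p z x"
    using even_theta_eq_multiple z(1,2) by metis
  have "C = 0"
    using C[OF t(1)] z_generic(2) vanish(1) by (simp add: G'_def theta_pair_self)
  then have "c = 0"
    using C[OF t(2)] t(3) vanish(2) by (simp add: G'_def)
  then show ?thesis
    using C[OF x] \<open>C = 0\<close> by (simp add: G'_def)
qed

lemma theta_pair_three_term:
  assumes nz: "r \<noteq> 0" "s \<noteq> 0" "t \<noteq> 0"
    and theta_nz: "theta r p \<noteq> 0" "theta (u * s) p \<noteq> 0"
    and u: "u = r * s * t\<^sup>2" and x: "x \<noteq> 0"
  shows "theta_pair p t x =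
      theta s p * theta (inverse r * u) p / (theta (inverse r) p * theta (u * s) p)
        * theta_pair p (r * s * t) x
    + theta (r * s) p * theta u p / (theta r p * theta (u * s) p) * theta_pair p (s * t) x"
    (is "_ = ?A * theta_pair p ?t1 x + ?B * theta_pair p ?t2 x")
proof -
  define F where "F x = theta_pair p t x - ?A * theta_pair p ?t1 x - ?B * theta_pair p ?t2 x" for x
  have t12: "?t1 * ?t2 = u * s" "?t1 / ?t2 = r" "?t2 / ?t1 = inverse r"
    "?t2 * ?t1 = u * s" "t * ?t1 = u" "t / ?t1 = inverse (r * s)" "t * ?t2 = inverse r * u"
    "t / ?t2 = inverse s"
    using nz unfolding u by (simp_all add: field_simps power2_eq_square)
  have theta_inv: "theta (inverse r) p = - theta r p / r" "theta (inverse s) p = - theta s p / s"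
    "theta (inverse (r * s)) p = - theta (r * s) p / (r * s)"
    using nz theta_inverse[of "r * s"] by (simp_all add: theta_inverse del: inverse_mult_distrib)
  have F: "even_theta F"
    unfolding F_def using nz by (intro even_theta_diff even_theta_theta_pair) simp_all
  have t12_generic: "theta_pair p ?t1 ?t2 \<noteq> 0"
    using nz theta_nz by (simp add: theta_pair_def t12)
  have "F ?t1 = 0" "F ?t2 = 0"
    unfolding F_def theta_pair_self unfolding theta_pair_def t12 theta_inv
    using nz theta_nz by (simp_all add: field_simps)
  then have "F x = 0"
    using even_theta_eq_0[OF F _ _ t12_generic _ _ x] nz by simp
  then show ?thesis
    by (simp add: F_def algebra_simps)
qed

end

lemma qpow_add: "qpow \<eta> s * qpow \<eta> r = qpow \<eta> (s + r)"
  by (simp add: qpow_def mult_exp_exp algebra_simps)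

lemma qpow_mult_qpow: "qpow \<eta> s * (qpow \<eta> r * z) = qpow \<eta> (s + r) * z"
  by (simp add: qpow_add mult.assoc[symmetric])

lemma inverse_qpow: "inverse (qpow \<eta> s) = qpow \<eta> (- s)"
  by (simp add: qpow_def exp_minus)

lemma qpow_nonzero: "qpow \<eta> s \<noteq> 0"
  by (simp add: qpow_def)

lemma phi_eq_theta_pair: "phi \<eta> p s a c x = theta_pair p (qpow \<eta> (a * (c - a) / 2) * s) x"
  by (simp add: phi_def theta_pair_def Let_def)

lemma phi_uminus: "phi \<eta> p s (- a) (- c) x = phi \<eta> p s a c x"
proof -
  have "- a * (- c - - a) = a * (c - a)"
    by (simp add: algebra_simps)
  then show ?thesis
    by (simp add: phi_def)
qed

lemma R_SOS_uminus: "R_SOS \<eta> p (- m) (- n) (- k) (- l) (- lam) u = R_SOS \<eta> p m n k l lam u"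
  by (auto simp: R_SOS_def Let_def minus_equation_iff add.commute)

lemma W_SOS_uminus: "W_SOS \<eta> p (- a) (- b) (- c) (- d) u = W_SOS \<eta> p a b c d u"
  using R_SOS_uminus[of \<eta> p "c - a" "d - c" "d - b" "b - a" a u] by (simp add: W_SOS_def)

lemma sum_heights_uminus:
  "(\<Sum>c\<in>{c. c - - a \<in> {1, -1} \<and> - d - c \<in> {1, -1}}. f c)
    = (\<Sum>c\<in>{c. c - a \<in> {1, -1} \<and> d - c \<in> {1, -1}}. f (- c :: complex))"
proof -
  have neg: "- z \<in> {1, -1} \<longleftrightarrow> z \<in> {1, -1}" for z :: complex
    by (auto simp: minus_equation_iff)
  have "c - - a = - (- c - a)" "- d - c = - (d - - c)" for c :: complex
    by simp_all
  then show ?thesis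
    by (intro sum.reindex_bij_witness[where i = uminus and j = uminus]) (simp_all only: neg, auto)
qed

lemma (in nome) phi_connection_ascending:
  assumes u: "su\<^sup>2 = u" "u \<noteq> 0" and b: "b = a + 1" and d: "d - b \<in> {1, -1}"
    and theta_nz: "theta (qpow \<eta> a) p \<noteq> 0" "theta (u * qpow \<eta> 1) p \<noteq> 0"
    and x: "x \<noteq> 0"
  shows "phi \<eta> p su b d x =
    (\<Sum>c\<in>{c. c - a \<in> {1, -1} \<and> d - c \<in> {1, -1}}.
        W_SOS \<eta> p a b c d u * phi \<eta> p (qpow \<eta> (1/2) * su) a c x)"
proof -
  have exps: "qpow \<eta> e * z = qpow \<eta> e' * z" if "e = e'" for e e' z
    using that by simp
  consider "d = a + 2" | "d = a"
    using b d by (auto simp: algebra_simps)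
  then show ?thesis
  proof cases
    case 1
    then have "{c. c - a \<in> {1, -1} \<and> d - c \<in> {1, -1}} = {a + 1}"
      by (auto simp: algebra_simps)
    moreover have "W_SOS \<eta> p a b (a + 1) d u = 1"
      using b 1 by (simp add: W_SOS_def R_SOS_def)
    moreover have "phi \<eta> p su b d x = phi \<eta> p (qpow \<eta> (1/2) * su) a (a + 1) x"
      unfolding phi_eq_theta_pair qpow_mult_qpow using b 1 by (simp add: field_simps)
    ultimately show ?thesis
      by simp
  next
    case 2
    define t where "t = qpow \<eta> (- (a + 1) / 2) * su"
    have "t \<noteq> 0"
      using u by (auto simp: t_def qpow_nonzero)
    have u_t: "u = qpow \<eta> a * qpow \<eta> 1 * t\<^sup>2"
    proof -
      have "qpow \<eta> a * qpow \<eta> 1 * (qpow \<eta> (- (a + 1) / 2))\<^sup>2 = qpow \<eta> 0"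
        unfolding power2_eq_square qpow_add by (rule arg_cong[where f = "qpow \<eta>"]) (simp add: field_simps)
      then show ?thesis
        unfolding t_def u(1)[symmetric] by (simp add: power_mult_distrib qpow_def ac_simps)
    qed
    have "{c. c - a \<in> {1, -1} \<and> d - c \<in> {1, -1}} = {a + 1, a - 1}"
      using 2 by (auto simp: algebra_simps)
    then have sum: "(\<Sum>c\<in>{c. c - a \<in> {1, -1} \<and> d - c \<in> {1, -1}}. f c)
        = f (a + 1) + f (a - 1)"
      for f :: "complex \<Rightarrow> complex"
      by simp
    have "phi \<eta> p su b d x = theta_pair p t x"
      unfolding phi_eq_theta_pair t_def using b 2 by (simp add: field_simps)
    moreover have "phi \<eta> p (qpow \<eta> (1/2) * su) a (a + 1) x
        = theta_pair p (qpow \<eta> a * qpow \<eta> 1 * t) x"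
      unfolding phi_eq_theta_pair t_def qpow_add qpow_mult_qpow
      by (rule arg_cong2[OF exps refl]) (simp add: field_simps)
    moreover have "phi \<eta> p (qpow \<eta> (1/2) * su) a (a - 1) x = theta_pair p (qpow \<eta> 1 * t) x"
      unfolding phi_eq_theta_pair t_def qpow_mult_qpow
      by (rule arg_cong2[OF exps refl]) (simp add: field_simps)
    moreover have "W_SOS \<eta> p a b (a + 1) d u
        = theta (qpow \<eta> 1) p * theta (inverse (qpow \<eta> a) * u) p
          / (theta (inverse (qpow \<eta> a)) p * theta (u * qpow \<eta> 1) p)"
      using b 2 by (simp add: W_SOS_def R_SOS_def Let_def inverse_qpow)
    moreover have "W_SOS \<eta> p a b (a - 1) d u
        = theta (qpow \<eta> a * qpow \<eta> 1) p * theta u p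
          / (theta (qpow \<eta> a) p * theta (u * qpow \<eta> 1) p)"
      using b 2 by (simp add: W_SOS_def R_SOS_def Let_def qpow_add)
    ultimately show ?thesis
      unfolding sum
      using theta_pair_three_term[OF qpow_nonzero qpow_nonzero \<open>t \<noteq> 0\<close> theta_nz u_t x] by simp
  qed
qed

theorem proposition3p2:
  fixes p \<eta> u su a b d x :: complex
  assumes "0 < norm p" and "norm p < 1"
    and "u \<noteq> 0" and "su ^ 2 = u"
    and "b - a \<in> {1, -1}" and "d - b \<in> {1, -1}"
    and "theta (qpow \<eta> a) p \<noteq> 0" and "theta (qpow \<eta> (-a)) p \<noteq> 0"
    and "theta (u * qpow \<eta> 1) p \<noteq> 0"
    and "x \<noteq> 0"
  shows "phi \<eta> p su b d x =
    (\<Sum>c\<in>{c. c - a \<in> {1, -1} \<and> d - c \<in> {1, -1}}.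
        W_SOS \<eta> p a b c d u * phi \<eta> p (qpow \<eta> (1/2) * su) a c x)"
proof -
  interpret nome p
    using assms(1,2) by unfold_locales
  have u: "su\<^sup>2 = u" "u \<noteq> 0"
    using assms(3,4) by simp_all
  consider "b = a + 1" | "- b = - a + 1"
    using assms(5) by (auto simp: algebra_simps)
  then show ?thesis
  proof cases
    case 1
    show ?thesis
      by (rule phi_connection_ascending[OF u 1 assms(6,7,9,10)])
  next
    case 2
    have "- d - - b \<in> {1, -1}"
      using assms(6) by (auto simp: algebra_simps)
    from phi_connection_ascending[OF u 2 this assms(8,9,10)] show ?thesis
      unfolding sum_heights_uminus phi_uminus W_SOS_uminus by simp
  qed
qed

end
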